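(* Let $G$ and $H$ be connected nontrivial graphs, let $u,x\in V(G)$ and $v,y\in V(H)$. Then $(u,v)$ and $(x,y)$ are mutually maximally distant vertices in the strong product $G\boxtimes H$ if and only if one of the following conditions holds: (i) $u,x$ are mutually maximally distant in $G$ and $v,y$ are mutually maximally distant in $H$; (ii) $u,x$ are mutually maximally distant in $G$ and $v=y$; (iii) $v,y$ are mutually maximally distant in $H$ and $u=x$; (iv) $u,x$ are mutually maximally distant in $G$ and $d_G(u,x)>d_H(v,y)$; (v) $v,y$ are mutually maximally distant in $H$ and $d_G(u,x)<d_H(v,y)$.
   Context: All graphs are simple; $d_G$ denotes the shortest-path distance in $G$, and $N_G(u)$ the open neighborhood of $u$. A vertex $u$ is maximally distant from $v$ in $G$ if for every $w\in N_G(u)$, $d_G(v,w)\le d_G(u,v)$; $u$ and $v$ are mutually maximally distant if $u$ is maximally distant from $v$ and $v$ is maximally distant from $u$. The strong product $G\boxtimes H$ has vertex set $V(G)\times V(H)$, with $(a,b)$ and $(c,d)$ adjacent iff either ($a=c$ and $bd\in E(H)$), or ($ac\in E(G)$ and $b=d$), or ($ac\in E(G)$ and $bd\in E(H)$). A graph is nontrivial if it has at least two vertices. *)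

theory Defs
  imports Main
begin

record 'a sgraph =
  verts :: "'a set"
  adj :: "'a \<Rightarrow> 'a \<Rightarrow> bool"

definition simple_graph :: "'a sgraph \<Rightarrow> bool" where
  "simple_graph G \<longleftrightarrow> finite (verts G) \<and>
     (\<forall>x y. adj G x y \<longrightarrow> x \<in> verts G \<and> y \<in> verts G) \<and>
     (\<forall>x y. adj G x y \<longrightarrow> adj G y x) \<and>
     (\<forall>x. \<not> adj G x x)"

definition walk_of_len :: "'a sgraph \<Rightarrow> 'a \<Rightarrow> 'a \<Rightarrow> nat \<Rightarrow> bool" where
  "walk_of_len G x y n \<longleftrightarrow> (\<exists>p :: nat \<Rightarrow> 'a. p 0 = x \<and> p n = y \<and>
     (\<forall>i\<le>n. p i \<in> verts G) \<and> (\<forall>i<n. adj G (p i) (p (Suc i))))"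

definition connected_graph :: "'a sgraph \<Rightarrow> bool" where
  "connected_graph G \<longleftrightarrow> verts G \<noteq> {} \<and>
     (\<forall>x\<in>verts G. \<forall>y\<in>verts G. \<exists>n. walk_of_len G x y n)"

definition nontrivial :: "'a sgraph \<Rightarrow> bool" where
  "nontrivial G \<longleftrightarrow> 2 \<le> card (verts G)"

(* shortest-path distance (meaningful for vertices of a connected graph) *)
definition dist :: "'a sgraph \<Rightarrow> 'a \<Rightarrow> 'a \<Rightarrow> nat" where
  "dist G x y = (LEAST n. walk_of_len G x y n)"

definition nbhd :: "'a sgraph \<Rightarrow> 'a \<Rightarrow> 'a set" where
  "nbhd G u = {w. adj G u w}"

definition max_distant :: "'a sgraph \<Rightarrow> 'a \<Rightarrow> 'a \<Rightarrow> bool" where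
  "max_distant G u v \<longleftrightarrow> (\<forall>w\<in>nbhd G u. dist G v w \<le> dist G u v)"

definition mutually_max_distant :: "'a sgraph \<Rightarrow> 'a \<Rightarrow> 'a \<Rightarrow> bool" where
  "mutually_max_distant G u v \<longleftrightarrow> max_distant G u v \<and> max_distant G v u"

definition strong_product :: "'a sgraph \<Rightarrow> 'b sgraph \<Rightarrow> ('a \<times> 'b) sgraph" where
  "strong_product G H = \<lparr> verts = verts G \<times> verts H,
     adj = (\<lambda>(a,b) (c,d). (a = c \<and> adj H b d) \<or> (adj G a c \<and> b = d) \<or> (adj G a c \<and> adj H b d)) \<rparr>"

end

theory Submission
  imports Defs
begin

text \<open>Distances in the strong product are the maxima of the factor distances: a pair of walks
is combined by letting the shorter one wait at its end, and conversely each projection of a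
product walk is a walk with some steps stalled. Consequently a neighbour \<open>(a, b)\<close> of \<open>(u, v)\<close>
lies at distance \<open>max (d(x, a)) (d(y, b))\<close> from \<open>(x, y)\<close>, and since a neighbour of \<open>u\<close> is at most
one step further from \<open>x\<close> than \<open>u\<close> is, only the factor realising the larger distance can
obstruct maximal distance. Vertices at distance 0 are never mutually maximally distant in a
connected nontrivial graph, which removes the equal-distance case with \<open>u = x\<close> and \<open>v = y\<close>.\<close>

lemma walk_of_len_refl: "x \<in> verts G \<Longrightarrow> walk_of_len G x x 0"
  unfolding walk_of_len_def by (intro exI[of _ "\<lambda>_. x"]) simp

lemma walk_of_len_snoc:
  assumes "walk_of_len G x y n" "adj G y z" "z \<in> verts G"
  shows "walk_of_len G x z (Suc n)"
proof -
  obtain p where p: "p 0 = x" "p n = y" "\<forall>i\<le>n. p i \<in> verts G" "\<forall>i<n. adj G (p i) (p (Suc i))"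
    using assms(1) unfolding walk_of_len_def by blast
  have "(p(Suc n := z)) 0 = x" "(p(Suc n := z)) (Suc n) = z" using p by simp_all
  moreover have "\<forall>i\<le>Suc n. (p(Suc n := z)) i \<in> verts G"
    using p assms(3) by (auto simp: le_Suc_eq)
  moreover have "\<forall>i<Suc n. adj G ((p(Suc n := z)) i) ((p(Suc n := z)) (Suc i))"
    using p assms(2) by (auto simp: less_Suc_eq)
  ultimately show ?thesis unfolding walk_of_len_def by blast
qed

lemma walk_of_len_rev:
  assumes "simple_graph G" "walk_of_len G x y n"
  shows "walk_of_len G y x n"
proof -
  obtain p where p: "p 0 = x" "p n = y" "\<forall>i\<le>n. p i \<in> verts G" "\<forall>i<n. adj G (p i) (p (Suc i))"
    using assms(2) unfolding walk_of_len_def by blast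
  have "adj G (p (n - i)) (p (n - Suc i))" if "i < n" for i
  proof -
    have "adj G (p (n - Suc i)) (p (Suc (n - Suc i)))" using p(4) that by simp
    moreover have "Suc (n - Suc i) = n - i" using that by simp
    ultimately show ?thesis using assms(1) unfolding simple_graph_def by metis
  qed
  then show ?thesis unfolding walk_of_len_def using p by (intro exI[of _ "\<lambda>i. p (n - i)"]) simp
qed

lemma dist_le: "walk_of_len G x y n \<Longrightarrow> dist G x y \<le> n"
  unfolding dist_def by (rule Least_le)

lemma walk_of_len_dist:
  assumes "connected_graph G" "x \<in> verts G" "y \<in> verts G"
  shows "walk_of_len G x y (dist G x y)"
  using assms unfolding connected_graph_def dist_def by (meson LeastI_ex)

lemma dist_eq_0_iff:
  assumes "connected_graph G" "x \<in> verts G" "y \<in> verts G"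
  shows "dist G x y = 0 \<longleftrightarrow> x = y"
proof
  assume "dist G x y = 0"
  then show "x = y" using walk_of_len_dist[OF assms] unfolding walk_of_len_def by auto
next
  assume "x = y"
  then show "dist G x y = 0" using dist_le[OF walk_of_len_refl[OF assms(2)]] by simp
qed

lemma dist_commute:
  assumes "simple_graph G" "connected_graph G" "x \<in> verts G" "y \<in> verts G"
  shows "dist G x y = dist G y x"
  using dist_le[OF walk_of_len_rev[OF assms(1) walk_of_len_dist[OF assms(2,3,4)]]]
    dist_le[OF walk_of_len_rev[OF assms(1) walk_of_len_dist[OF assms(2,4,3)]]] by simp

lemma dist_nbhd_le:
  assumes "simple_graph G" "connected_graph G" "x \<in> verts G" "u \<in> verts G" "a \<in> nbhd G u"
  shows "dist G x a \<le> Suc (dist G x u)"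
proof -
  have "adj G u a" "a \<in> verts G" using assms(1,5) unfolding nbhd_def simple_graph_def by auto
  then show ?thesis using dist_le[OF walk_of_len_snoc[OF walk_of_len_dist[OF assms(2,3,4)]]] by simp
qed

lemma has_neighbour:
  assumes "simple_graph G" "connected_graph G" "nontrivial G" "u \<in> verts G"
  obtains w where "adj G u w"
proof -
  have "\<not> verts G \<subseteq> {u}"
    using assms(3) card_mono[of "{u}" "verts G"] unfolding nontrivial_def by auto
  then obtain w where w: "w \<in> verts G" "w \<noteq> u" by blast
  then obtain n p where p: "p 0 = u" "p n = w" "\<forall>i<n. adj G (p i) (p (Suc i))"
    using assms(2,4) unfolding connected_graph_def walk_of_len_def by meson
  then have "n > 0" using w by (cases n) auto
  then show ?thesis using p that by force
qed

lemma not_max_distant_self: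
  assumes "simple_graph G" "connected_graph G" "nontrivial G" "u \<in> verts G"
  shows "\<not> max_distant G u u"
proof
  assume max: "max_distant G u u"
  obtain w where w: "adj G u w" using has_neighbour[OF assms] .
  then have "w \<in> verts G" "w \<noteq> u" using assms(1) unfolding simple_graph_def by blast+
  moreover have "dist G u w = 0"
    using max w dist_eq_0_iff[OF assms(2,4,4)] unfolding max_distant_def nbhd_def by auto
  ultimately show False using dist_eq_0_iff[OF assms(2,4)] by blast
qed

definition weak_hom :: "'a sgraph \<Rightarrow> 'b sgraph \<Rightarrow> ('a \<Rightarrow> 'b) \<Rightarrow> bool" where
  "weak_hom G' G f \<longleftrightarrow> (\<forall>a\<in>verts G'. f a \<in> verts G) \<and>
     (\<forall>a b. adj G' a b \<longrightarrow> f a = f b \<or> adj G (f a) (f b))"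

lemma dist_weak_hom_le:
  assumes f: "weak_hom G' G f" and "walk_of_len G' s t k"
  shows "dist G (f s) (f t) \<le> k"
proof -
  obtain r where r: "r 0 = s" "r k = t" "\<forall>i\<le>k. r i \<in> verts G'"
    "\<forall>i<k. adj G' (r i) (r (Suc i))"
    using assms(2) unfolding walk_of_len_def by blast
  have "i \<le> k \<longrightarrow> (\<exists>m\<le>i. walk_of_len G (f s) (f (r i)) m)" for i
  proof (induction i)
    case 0
    show ?case using r f walk_of_len_refl unfolding weak_hom_def by fastforce
  next
    case (Suc i)
    show ?case
    proof
      assume i: "Suc i \<le> k"
      with Suc.IH obtain m where m: "m \<le> i" "walk_of_len G (f s) (f (r i)) m" by auto
      have "f (r i) = f (r (Suc i)) \<or> adj G (f (r i)) (f (r (Suc i)))"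
        using f r(4) i unfolding weak_hom_def by simp
      moreover have "f (r (Suc i)) \<in> verts G" using f r(3) i unfolding weak_hom_def by simp
      ultimately show "\<exists>m\<le>Suc i. walk_of_len G (f s) (f (r (Suc i))) m"
        using m walk_of_len_snoc by (metis Suc_le_mono le_SucI)
    qed
  qed
  then show ?thesis using r(2) dist_le by (meson le_refl order_trans)
qed

lemma weak_hom_fst: "weak_hom (strong_product G H) G fst"
  unfolding weak_hom_def strong_product_def by auto

lemma weak_hom_snd: "weak_hom (strong_product G H) H snd"
  unfolding weak_hom_def strong_product_def by auto

lemma walk_of_len_strong_product:
  assumes "walk_of_len G u x m" "walk_of_len H v y n"
  shows "walk_of_len (strong_product G H) (u, v) (x, y) (max m n)"
proof -
  obtain p where p: "p 0 = u" "p m = x" "\<forall>i\<le>m. p i \<in> verts G" "\<forall>i<m. adj G (p i) (p (Suc i))"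
    using assms(1) unfolding walk_of_len_def by blast
  obtain q where q: "q 0 = v" "q n = y" "\<forall>i\<le>n. q i \<in> verts H" "\<forall>i<n. adj H (q i) (q (Suc i))"
    using assms(2) unfolding walk_of_len_def by blast
  define r where "r i = (p (min i m), q (min i n))" for i
  have "adj (strong_product G H) (r i) (r (Suc i))" if "i < max m n" for i
  proof -
    have "i < m \<and> adj G (p (min i m)) (p (min (Suc i) m)) \<or>
        \<not> i < m \<and> p (min i m) = p (min (Suc i) m)"
      using p(4) by (cases "i < m") (auto simp: min_def)
    moreover have "i < n \<and> adj H (q (min i n)) (q (min (Suc i) n)) \<or>
        \<not> i < n \<and> q (min i n) = q (min (Suc i) n)"
      using q(4) by (cases "i < n") (auto simp: min_def)
    ultimately show ?thesis using that unfolding r_def strong_product_def by auto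
  qed
  moreover have "r i \<in> verts (strong_product G H)" if "i \<le> max m n" for i
    using p(3) q(3) unfolding r_def strong_product_def by auto
  moreover have "r 0 = (u, v)" "r (max m n) = (x, y)" using p q unfolding r_def by (auto simp: min_def)
  ultimately show ?thesis unfolding walk_of_len_def by blast
qed

lemma dist_strong_product:
  assumes "connected_graph G" "connected_graph H"
    "u \<in> verts G" "x \<in> verts G" "v \<in> verts H" "y \<in> verts H"
  shows "dist (strong_product G H) (u, v) (x, y) = max (dist G u x) (dist H v y)"
proof -
  have walk: "walk_of_len (strong_product G H) (u, v) (x, y) (max (dist G u x) (dist H v y))"
    using walk_of_len_strong_product
      walk_of_len_dist[OF assms(1,3,4)] walk_of_len_dist[OF assms(2,5,6)] .
  then have shortest:
      "walk_of_len (strong_product G H) (u, v) (x, y) (dist (strong_product G H) (u, v) (x, y))"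
    unfolding dist_def by (rule LeastI)
  show ?thesis
    using dist_le[OF walk] dist_weak_hom_le[OF weak_hom_fst shortest]
      dist_weak_hom_le[OF weak_hom_snd shortest] by simp
qed

text \<open>The neighbours \<open>(a, v)\<close> and \<open>(u, b)\<close> are the only constraints: every other neighbour
\<open>(a, b)\<close> is then bounded componentwise.\<close>

lemma max_distant_strong_product_iff_nbhd:
  assumes "simple_graph G" "simple_graph H" "connected_graph G" "connected_graph H"
    "u \<in> verts G" "x \<in> verts G" "v \<in> verts H" "y \<in> verts H"
  defines "D \<equiv> max (dist G u x) (dist H v y)"
  shows "max_distant (strong_product G H) (u, v) (x, y) \<longleftrightarrow>
    (\<forall>a\<in>nbhd G u. dist G x a \<le> D) \<and> (\<forall>b\<in>nbhd H v. dist H y b \<le> D)"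
    (is "_ \<longleftrightarrow> ?bounds")
proof -
  have nbhd_verts: "nbhd G u \<subseteq> verts G" "nbhd H v \<subseteq> verts H"
    using assms(1,2) unfolding nbhd_def simple_graph_def by auto
  have not_nbhd_self: "u \<notin> nbhd G u" "v \<notin> nbhd H v"
    using assms(1,2) unfolding nbhd_def simple_graph_def by auto
  have nbhd_product: "nbhd (strong_product G H) (u, v) =
      insert u (nbhd G u) \<times> insert v (nbhd H v) - {(u, v)}"
    using assms(1,2) unfolding nbhd_def strong_product_def simple_graph_def by auto
  have dist_nbhd: "dist (strong_product G H) (x, y) (a, b) = max (dist G x a) (dist H y b)"
    if "a \<in> insert u (nbhd G u)" "b \<in> insert v (nbhd H v)" for a b
  proof -
    have "a \<in> verts G" "b \<in> verts H" using that nbhd_verts assms(5,7) by auto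
    then show ?thesis using dist_strong_product[OF assms(3,4,6) _ assms(8)] by blast
  qed
  have "dist G x u \<le> D" "dist H y v \<le> D"
    using dist_commute[OF assms(1,3,5,6)] dist_commute[OF assms(2,4,7,8)] unfolding D_def by simp_all
  have max_distant_iff: "max_distant (strong_product G H) (u, v) (x, y) \<longleftrightarrow>
      (\<forall>(a, b)\<in>insert u (nbhd G u) \<times> insert v (nbhd H v) - {(u, v)}.
         max (dist G x a) (dist H y b) \<le> D)"
    unfolding max_distant_def nbhd_product dist_strong_product[OF assms(3-8)] D_def[symmetric]
    using dist_nbhd by (intro ball_cong) auto
  show ?thesis
  proof
    assume "max_distant (strong_product G H) (u, v) (x, y)"
    then show ?bounds unfolding max_distant_iff using not_nbhd_self by fastforce
  next
    assume ?bounds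
    then show "max_distant (strong_product G H) (u, v) (x, y)"
      unfolding max_distant_iff using \<open>dist G x u \<le> D\<close> \<open>dist H y v \<le> D\<close> by fastforce
  qed
qed

lemma max_distant_strong_product:
  assumes "simple_graph G" "simple_graph H" "connected_graph G" "connected_graph H"
    "u \<in> verts G" "x \<in> verts G" "v \<in> verts H" "y \<in> verts H"
  shows "max_distant (strong_product G H) (u, v) (x, y) \<longleftrightarrow>
    (if dist G u x > dist H v y then max_distant G u x
     else if dist G u x < dist H v y then max_distant H v y
     else max_distant G u x \<and> max_distant H v y)"
proof -
  have G_slack: "\<forall>a\<in>nbhd G u. dist G x a \<le> Suc (dist G u x)"
    using dist_nbhd_le[OF assms(1,3,6,5)] dist_commute[OF assms(1,3,5,6)] by simp
  have H_slack: "\<forall>b\<in>nbhd H v. dist H y b \<le> Suc (dist H v y)"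
    using dist_nbhd_le[OF assms(2,4,8,7)] dist_commute[OF assms(2,4,7,8)] by simp
  note product_iff = max_distant_strong_product_iff_nbhd[OF assms]
    max_distant_def[of G] max_distant_def[of H]
  show ?thesis
  proof (cases rule: linorder_cases[of "dist G u x" "dist H v y"])
    case less
    then have "\<forall>a\<in>nbhd G u. dist G x a \<le> dist H v y" using G_slack by fastforce
    with less show ?thesis by (simp add: product_iff)
  next
    case greater
    then have "\<forall>b\<in>nbhd H v. dist H y b \<le> dist G u x" using H_slack by fastforce
    with greater show ?thesis by (simp add: product_iff)
  qed (simp add: product_iff)
qed

lemma mutually_max_distant_strong_product:
  assumes "simple_graph G" "simple_graph H" "connected_graph G" "connected_graph H"
    "u \<in> verts G" "x \<in> verts G" "v \<in> verts H" "y \<in> verts H"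
  shows "mutually_max_distant (strong_product G H) (u, v) (x, y) \<longleftrightarrow>
    (if dist G u x > dist H v y then mutually_max_distant G u x
     else if dist G u x < dist H v y then mutually_max_distant H v y
     else mutually_max_distant G u x \<and> mutually_max_distant H v y)"
  unfolding mutually_max_distant_def max_distant_strong_product[OF assms]
    max_distant_strong_product[OF assms(1-4,6,5,8,7)]
    dist_commute[OF assms(1,3,6,5)] dist_commute[OF assms(2,4,8,7)]
  by auto

theorem lemma6:
  fixes G :: "'a sgraph" and H :: "'b sgraph"
  assumes "simple_graph G" "simple_graph H"
    and "connected_graph G" "connected_graph H"
    and "nontrivial G" "nontrivial H"
    and "u \<in> verts G" "x \<in> verts G" "v \<in> verts H" "y \<in> verts H"
  shows "mutually_max_distant (strong_product G H) (u, v) (x, y) \<longleftrightarrow>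
     (mutually_max_distant G u x \<and> mutually_max_distant H v y) \<or>
     (mutually_max_distant G u x \<and> v = y) \<or>
     (mutually_max_distant H v y \<and> u = x) \<or>
     (mutually_max_distant G u x \<and> dist G u x > dist H v y) \<or>
     (mutually_max_distant H v y \<and> dist G u x < dist H v y)"
proof -
  have not_self: "\<not> mutually_max_distant G u u" "\<not> mutually_max_distant H v v"
    using not_max_distant_self[OF assms(1,3,5,7)] not_max_distant_self[OF assms(2,4,6,9)]
    unfolding mutually_max_distant_def by simp_all
  have dist_0: "dist G u x = 0 \<longleftrightarrow> u = x" "dist H v y = 0 \<longleftrightarrow> v = y"
    using dist_eq_0_iff[OF assms(3,7,8)] dist_eq_0_iff[OF assms(4,9,10)] .
  note product = mutually_max_distant_strong_product[OF assms(1-4,7-10)]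
  show ?thesis
  proof (cases rule: linorder_cases[of "dist G u x" "dist H v y"])
    case less
    then show ?thesis unfolding product using dist_0 by auto
  next
    case equal
    then show ?thesis unfolding product using dist_0 not_self by (cases "u = x") auto
  next
    case greater
    then show ?thesis unfolding product using dist_0 by auto
  qed
qed

end
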